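(* Let $X$ and $Y$ be connected finite undirected graphs, each with $n$ vertices, and let $p>n$ be a prime. Let $Z$ be the disjoint union of $p$ connected components $Z_1,\ldots,Z_p$, where $Z_i$ is an isomorphic copy of $X$ for each $1\le i<p$ and $Z_p$ is an isomorphic copy of $Y$. If the cyclic group $\mathbb{Z}/p\mathbb{Z}$ is representable on $Z$, then $X$ and $Y$ are isomorphic.
   Context: For a graph $W$, $\mathrm{Aut}(W)$ denotes its automorphism group (permutations of the vertex set mapping edges to edges and non-edges to non-edges). A finite group $G$ is said to be representable on a graph $W$ if there exists a nontrivial homomorphism from $G$ to $\mathrm{Aut}(W)$ (i.e. one not mapping every element to the identity). *)

theory Defs
  imports "HOL-Algebra.Elementary_Groups" "HOL-Algebra.Bij" "HOL-Computational_Algebra.Primes"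
begin

definition fin_graph :: "'a set \<Rightarrow> ('a \<Rightarrow> 'a \<Rightarrow> bool) \<Rightarrow> bool" where
  "fin_graph V E \<longleftrightarrow> finite V \<and> (\<forall>u v. E u v \<longrightarrow> u \<in> V \<and> v \<in> V)
     \<and> (\<forall>u v. E u v \<longrightarrow> E v u) \<and> (\<forall>u. \<not> E u u)"

definition connected_graph :: "'a set \<Rightarrow> ('a \<Rightarrow> 'a \<Rightarrow> bool) \<Rightarrow> bool" where
  "connected_graph V E \<longleftrightarrow> V \<noteq> {} \<and> (\<forall>u\<in>V. \<forall>v\<in>V. E\<^sup>*\<^sup>* u v)"

definition graph_iso :: "'a set \<Rightarrow> ('a \<Rightarrow> 'a \<Rightarrow> bool) \<Rightarrow> 'b set \<Rightarrow> ('b \<Rightarrow> 'b \<Rightarrow> bool) \<Rightarrow> bool" where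
  "graph_iso V E V' E' \<longleftrightarrow> (\<exists>f. bij_betw f V V' \<and> (\<forall>u\<in>V. \<forall>v\<in>V. E u v \<longleftrightarrow> E' (f u) (f v)))"

definition aut_group :: "'a set \<Rightarrow> ('a \<Rightarrow> 'a \<Rightarrow> bool) \<Rightarrow> ('a \<Rightarrow> 'a) monoid" where
  "aut_group V E =
    \<lparr>carrier = {f \<in> Bij V. \<forall>u\<in>V. \<forall>v\<in>V. E u v \<longleftrightarrow> E (f u) (f v)},
     monoid.mult = \<lambda>g\<in>Bij V. \<lambda>f\<in>Bij V. compose V g f,
     one = \<lambda>x\<in>V. x\<rparr>"

definition representable :: "'g monoid \<Rightarrow> 'a set \<Rightarrow> ('a \<Rightarrow> 'a \<Rightarrow> bool) \<Rightarrow> bool" where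
  "representable G V E \<longleftrightarrow>
     (\<exists>h \<in> hom G (aut_group V E). \<exists>g \<in> carrier G. h g \<noteq> \<one>\<^bsub>aut_group V E\<^esub>)"

definition union_verts :: "nat \<Rightarrow> 'a set \<Rightarrow> 'a set \<Rightarrow> (nat \<times> 'a) set" where
  "union_verts p V1 V2 = {(i, v). 1 \<le> i \<and> i < p \<and> v \<in> V1} \<union> {(i, v). i = p \<and> v \<in> V2}"

definition union_edges :: "nat \<Rightarrow> ('a \<Rightarrow> 'a \<Rightarrow> bool) \<Rightarrow> ('a \<Rightarrow> 'a \<Rightarrow> bool)
    \<Rightarrow> (nat \<times> 'a) \<Rightarrow> (nat \<times> 'a) \<Rightarrow> bool" where
  "union_edges p E1 E2 = (\<lambda>(i, u) (j, v). i = j \<and>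
      ((1 \<le> i \<and> i < p \<and> E1 u v) \<or> (i = p \<and> E2 u v)))"

end

theory Submission
  imports Defs "HOL-Combinatorics.Orbits"
begin

text \<open>The image \<sigma> of the generator is a nontrivial automorphism of Z with \<sigma>^p = id, and it
  permutes the connected components of Z, i.e. the p copies. If \<sigma> moves the copy of Y onto
  a copy of X, then \<sigma> restricted to it is an isomorphism. Otherwise \<sigma> permutes the p - 1 copies
  of X among themselves. A map whose p-th power fixes a point of an invariant set with fewer
  than p elements fixes that point (the orbit length divides the prime p and is at most the size
  of the set), so \<sigma> fixes every copy and then, every copy having n < p vertices, every vertex:
  a contradiction.\<close>

lemma funpow_prime_period_fixed:
  fixes f :: "'b \<Rightarrow> 'b"
  assumes "prime p" and period: "(f ^^ p) x = x"
    and "finite S" and "card S < p" and closed: "f ` S \<subseteq> S" and "x \<in> S"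
  shows "f x = x"
proof -
  define d where "d = funpow_dist1 f x x"
  have "x \<in> orbit f x"
    unfolding orbit_altdef using period prime_gt_0_nat[OF \<open>prime p\<close>]
    by (auto intro!: exI[of _ p])
  then have d_period: "(f ^^ d) x = x" and inj: "inj_on (\<lambda>k. (f ^^ k) x) {0..<d}"
    unfolding d_def by (rule funpow_dist1_prop, rule inj_on_funpow_dist1)
  have "(f ^^ (p mod d)) x = x"
    using funpow_mod_eq[OF d_period] period by simp
  then have "p mod d = 0"
    using funpow_dist1_least[of "p mod d" f x x] unfolding d_def
    by (metis mod_less_divisor zero_less_Suc neq0_conv)
  then have "d dvd p" by auto
  moreover have "d \<noteq> p"
  proof
    assume "d = p"
    have "(f ^^ k) x \<in> S" for k
      by (induction k) (use closed \<open>x \<in> S\<close> in auto)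
    then have "card ((\<lambda>k. (f ^^ k) x) ` {0..<d}) \<le> card S"
      by (intro card_mono[OF \<open>finite S\<close>]) auto
    with inj \<open>d = p\<close> \<open>card S < p\<close> show False
      by (simp add: card_image)
  qed
  ultimately have "d = 1"
    using \<open>prime p\<close> by (auto simp: prime_nat_iff)
  with d_period show "f x = x" by simp
qed

lemma aut_group_carrierD:
  assumes "f \<in> carrier (aut_group V E)"
  shows "bij_betw f V V" and "f \<in> extensional V"
    and "u \<in> V \<Longrightarrow> v \<in> V \<Longrightarrow> E (f u) (f v) \<longleftrightarrow> E u v"
  using assms by (auto simp: aut_group_def Bij_def)

lemma aut_group_mult:
  "f \<in> carrier (aut_group V E) \<Longrightarrow> g \<in> carrier (aut_group V E)
    \<Longrightarrow> f \<otimes>\<^bsub>aut_group V E\<^esub> g = compose V f g"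
  by (simp add: aut_group_def)

lemma hom_aut_group_zero:
  assumes h: "h \<in> hom (integer_mod_group p) (aut_group V E)" and "x \<in> V"
  shows "h 0 x = x"
proof -
  have h0: "h 0 \<in> carrier (aut_group V E)"
    using h by (auto simp: hom_def)
  have "h 0 = h 0 \<otimes>\<^bsub>aut_group V E\<^esub> h 0"
    using hom_mult[OF h, of 0 0] by simp
  then have "h 0 (h 0 x) = h 0 x"
    using \<open>x \<in> V\<close> by (metis aut_group_mult[OF h0 h0] compose_eq)
  moreover have "h 0 x \<in> V"
    using aut_group_carrierD(1)[OF h0] \<open>x \<in> V\<close> by (meson bij_betwE)
  ultimately show ?thesis
    using aut_group_carrierD(1)[OF h0] \<open>x \<in> V\<close> by (meson bij_betw_imp_inj_on inj_onD)
qed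

lemma hom_aut_group_funpow:
  assumes h: "h \<in> hom (integer_mod_group p) (aut_group V E)" and "1 < p" and "x \<in> V"
  shows "h (int k mod int p) x = (h 1 ^^ k) x"
  using \<open>x \<in> V\<close>
proof (induction k arbitrary: x)
  case 0
  then show ?case using hom_aut_group_zero[OF h] by simp
next
  case (Suc k)
  have one: "1 \<in> carrier (integer_mod_group p)" and kp: "int k mod int p \<in> carrier (integer_mod_group p)"
    using \<open>1 < p\<close> by (auto simp: carrier_integer_mod_group)
  have h_carrier: "h a \<in> carrier (aut_group V E)" if "a \<in> carrier (integer_mod_group p)" for a
    using h that by (auto simp: hom_def)
  have "int (Suc k) mod int p = (int k mod int p + 1) mod int p"
    by (simp add: mod_add_right_eq add.commute)
  then have "h (int (Suc k) mod int p) = compose V (h (int k mod int p)) (h 1)"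
    using hom_mult[OF h kp one] aut_group_mult[OF h_carrier[OF kp] h_carrier[OF one]] by simp
  moreover have "h 1 x \<in> V"
    using aut_group_carrierD(1)[OF h_carrier[OF one]] Suc.prems by (meson bij_betwE)
  ultimately show ?case
    using Suc by (simp add: compose_eq funpow_swap1)
qed

lemma representable_integer_mod_group_generator:
  assumes "representable (integer_mod_group p) V E" and "1 < p"
  obtains \<sigma> where "\<sigma> \<in> carrier (aut_group V E)" and "\<And>x. x \<in> V \<Longrightarrow> (\<sigma> ^^ p) x = x"
    and "\<exists>x\<in>V. \<sigma> x \<noteq> x"
proof -
  obtain h g where h: "h \<in> hom (integer_mod_group p) (aut_group V E)"
    and g: "g \<in> carrier (integer_mod_group p)" and nontrivial: "h g \<noteq> \<one>\<^bsub>aut_group V E\<^esub>"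
    using assms(1) unfolding representable_def by blast
  have one: "1 \<in> carrier (integer_mod_group p)"
    using \<open>1 < p\<close> by simp
  have "h 1 \<in> carrier (aut_group V E)"
    using h one by (auto simp: hom_def)
  moreover have "(h 1 ^^ p) x = x" if "x \<in> V" for x
    using hom_aut_group_funpow[OF h \<open>1 < p\<close> that, of p] hom_aut_group_zero[OF h that] by simp
  moreover have "\<exists>x\<in>V. h 1 x \<noteq> x"
  proof (rule ccontr)
    assume "\<not> ?thesis"
    then have "(h 1 ^^ k) x = x" if "x \<in> V" for k x
      using that by (induction k) auto
    moreover have "g = int (nat g) mod int p"
      using g \<open>1 < p\<close> by (simp add: carrier_integer_mod_group)
    ultimately have "h g x = x" if "x \<in> V" for x
      using hom_aut_group_funpow[OF h \<open>1 < p\<close> that, of "nat g"] that by metis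
    moreover have "h g \<in> extensional V"
      using h g by (auto simp: hom_def intro: aut_group_carrierD(2))
    ultimately have "h g = (\<lambda>x\<in>V. x)"
      by (auto simp: extensional_def)
    with nontrivial show False
      by (simp add: aut_group_def)
  qed
  ultimately show ?thesis using that by blast
qed

lemma rtranclp_map:
  assumes "\<And>u v. R u v \<Longrightarrow> S (f u) (f v)" and "R\<^sup>*\<^sup>* a b"
  shows "S\<^sup>*\<^sup>* (f a) (f b)"
  using assms(2) by (induction rule: rtranclp_induct) (auto intro: rtranclp.rtrancl_into_rtrancl assms(1))

lemma graph_iso_sym:
  assumes "graph_iso V E V' E'"
  shows "graph_iso V' E' V E"
proof -
  obtain f where f: "bij_betw f V V'" and edges: "\<forall>u\<in>V. \<forall>v\<in>V. E u v \<longleftrightarrow> E' (f u) (f v)"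
    using assms unfolding graph_iso_def by blast
  define g where "g = the_inv_into V f"
  have g: "bij_betw g V' V"
    unfolding g_def by (rule bij_betw_the_inv_into[OF f])
  have "E' u v \<longleftrightarrow> E (g u) (g v)" if "u \<in> V'" "v \<in> V'" for u v
    using edges bij_betwE[OF g] that f_the_inv_into_f_bij_betw[OF f] unfolding g_def by metis
  with g show ?thesis
    unfolding graph_iso_def by blast
qed

lemma mem_union_verts [simp]:
  "(i, v) \<in> union_verts p V1 V2 \<longleftrightarrow> (1 \<le> i \<and> i < p \<and> v \<in> V1) \<or> (i = p \<and> v \<in> V2)"
  by (simp add: union_verts_def)

lemma union_edges_iff [simp]:
  "union_edges p E1 E2 (i, u) (j, v) \<longleftrightarrow> i = j \<and> ((1 \<le> i \<and> i < p \<and> E1 u v) \<or> (i = p \<and> E2 u v))"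
  by (simp add: union_edges_def)

lemma finite_union_verts:
  assumes "finite V1" and "finite V2"
  shows "finite (union_verts p V1 V2)"
proof (rule finite_subset)
  show "union_verts p V1 V2 \<subseteq> {0..p} \<times> (V1 \<union> V2)"
    by (auto simp: union_verts_def)
qed (use assms in auto)

lemma union_edges_in_verts:
  assumes "fin_graph V1 E1" and "fin_graph V2 E2" and "union_edges p E1 E2 u v"
  shows "u \<in> union_verts p V1 V2 \<and> v \<in> union_verts p V1 V2"
  using assms by (cases u; cases v) (auto simp: fin_graph_def)

lemma union_edges_rtranclp_fst:
  assumes "(union_edges p E1 E2)\<^sup>*\<^sup>* u v"
  shows "fst u = fst v"
  using assms by (induction rule: rtranclp_induct) (auto simp: union_edges_def split: prod.splits)

lemma union_edges_rtranclp_copy: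
  assumes "connected_graph V1 E1" and "connected_graph V2 E2"
    and "(i, x) \<in> union_verts p V1 V2" and "(i, y) \<in> union_verts p V1 V2"
  shows "(union_edges p E1 E2)\<^sup>*\<^sup>* (i, x) (i, y)"
proof (cases "i < p")
  case True
  with assms have "E1\<^sup>*\<^sup>* x y" and "1 \<le> i"
    by (auto simp: connected_graph_def)
  with True show ?thesis
    using rtranclp_map[where f = "Pair i" and R = E1] by auto
next
  case False
  with assms have "E2\<^sup>*\<^sup>* x y" and "i = p"
    by (auto simp: connected_graph_def)
  then show ?thesis
    using rtranclp_map[where f = "Pair p" and R = E2] by auto
qed

lemma aut_group_rtranclp:
  assumes "\<sigma> \<in> carrier (aut_group V E)" and "\<And>u v. E u v \<Longrightarrow> u \<in> V \<and> v \<in> V"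
    and "E\<^sup>*\<^sup>* a b"
  shows "E\<^sup>*\<^sup>* (\<sigma> a) (\<sigma> b)"
proof (rule rtranclp_map[OF _ assms(3)])
  fix u v
  assume "E u v"
  with assms(2) aut_group_carrierD(3)[OF assms(1)] show "E (\<sigma> u) (\<sigma> v)"
    by blast
qed

locale union_automorphism =
  fixes V1 V2 :: "'a set" and E1 E2 :: "'a \<Rightarrow> 'a \<Rightarrow> bool" and p :: nat
    and \<sigma> :: "nat \<times> 'a \<Rightarrow> nat \<times> 'a"
  assumes graph1: "fin_graph V1 E1" and graph2: "fin_graph V2 E2"
    and connected1: "connected_graph V1 E1" and connected2: "connected_graph V2 E2"
    and aut: "\<sigma> \<in> carrier (aut_group (union_verts p V1 V2) (union_edges p E1 E2))"
begin

abbreviation Z :: "(nat \<times> 'a) set" where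
  "Z \<equiv> union_verts p V1 V2"

lemma \<sigma>_in: "z \<in> Z \<Longrightarrow> \<sigma> z \<in> Z"
  using aut_group_carrierD(1)[OF aut] by (meson bij_betwE)

lemma \<sigma>_inj: "inj_on \<sigma> Z"
  using aut_group_carrierD(1)[OF aut] by (rule bij_betw_imp_inj_on)

lemma \<sigma>_funpow_in: "z \<in> Z \<Longrightarrow> (\<sigma> ^^ k) z \<in> Z"
  by (induction k) (auto intro: \<sigma>_in)

lemma fst_\<sigma>_eq:
  assumes "z \<in> Z" and "w \<in> Z" and "fst z = fst w"
  shows "fst (\<sigma> z) = fst (\<sigma> w)"
proof -
  have "(union_edges p E1 E2)\<^sup>*\<^sup>* z w"
    using assms union_edges_rtranclp_copy[OF connected1 connected2, of "fst z" "snd z" p "snd w"]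
    by (cases z; cases w) auto
  then have "(union_edges p E1 E2)\<^sup>*\<^sup>* (\<sigma> z) (\<sigma> w)"
    using aut_group_rtranclp[OF aut] union_edges_in_verts[OF graph1 graph2] by blast
  then show ?thesis
    by (rule union_edges_rtranclp_fst)
qed

text \<open>Any vertex of copy i would do here: copies are connected, so \<sigma> maps each of them into
  a single copy (lemma fst_\<sigma>).\<close>
definition copy_image :: "nat \<Rightarrow> nat" where
  "copy_image i = fst (\<sigma> (i, SOME v. (i, v) \<in> Z))"

lemma fst_\<sigma>:
  assumes "z \<in> Z"
  shows "fst (\<sigma> z) = copy_image (fst z)"
proof -
  have "(fst z, SOME v. (fst z, v) \<in> Z) \<in> Z"
    using assms by (cases z) (auto intro: someI)
  with assms show ?thesis
    unfolding copy_image_def by (intro fst_\<sigma>_eq) auto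
qed

lemma fst_\<sigma>_funpow:
  assumes "z \<in> Z"
  shows "fst ((\<sigma> ^^ k) z) = (copy_image ^^ k) (fst z)"
  by (induction k) (auto simp: fst_\<sigma> \<sigma>_funpow_in assms)

lemma graph_iso_if_last_copy_moved:
  assumes "card V1 = card V2" and "copy_image p \<noteq> p"
  shows "graph_iso V1 E1 V2 E2"
proof -
  define j where "j = copy_image p"
  define f where "f y = snd (\<sigma> (p, y))" for y
  have \<sigma>_last: "\<sigma> (p, y) = (j, f y) \<and> 1 \<le> j \<and> j < p \<and> f y \<in> V1" if "y \<in> V2" for y
  proof -
    have "\<sigma> (p, y) \<in> Z" and "fst (\<sigma> (p, y)) = j"
      using that \<sigma>_in fst_\<sigma>[of "(p, y)"] by (auto simp: j_def)
    with assms(2) show ?thesis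
      by (cases "\<sigma> (p, y)") (auto simp: f_def j_def)
  qed
  have "inj_on f V2"
  proof (rule inj_onI)
    fix y y' assume "y \<in> V2" "y' \<in> V2" "f y = f y'"
    then have "\<sigma> (p, y) = \<sigma> (p, y')"
      using \<sigma>_last[of y] \<sigma>_last[of y'] by simp
    then have "(p, y) = (p, y')"
      by (rule inj_onD[OF \<sigma>_inj]) (use \<open>y \<in> V2\<close> \<open>y' \<in> V2\<close> in simp_all)
    then show "y = y'"
      by simp
  qed
  moreover have "f ` V2 \<subseteq> V1"
    using \<sigma>_last by auto
  ultimately have "bij_betw f V2 V1"
    using assms(1) graph1 by (simp add: bij_betw_def card_image card_subset_eq fin_graph_def)
  moreover have "E2 u v \<longleftrightarrow> E1 (f u) (f v)" if "u \<in> V2" "v \<in> V2" for u v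
  proof -
    have "E2 u v \<longleftrightarrow> union_edges p E1 E2 (p, u) (p, v)"
      by simp
    also have "\<dots> \<longleftrightarrow> union_edges p E1 E2 (\<sigma> (p, u)) (\<sigma> (p, v))"
      using aut_group_carrierD(3)[OF aut] that by simp
    also have "\<dots> \<longleftrightarrow> E1 (f u) (f v)"
      using \<sigma>_last[OF that(1)] \<sigma>_last[OF that(2)] by simp
    finally show ?thesis .
  qed
  ultimately have "graph_iso V2 E2 V1 E1"
    unfolding graph_iso_def by blast
  then show ?thesis
    by (rule graph_iso_sym)
qed

end

locale prime_order_union_automorphism = union_automorphism +
  assumes prime: "prime p" and card1: "card V1 < p" and card2: "card V2 < p"
    and period: "\<And>z. z \<in> union_verts p V1 V2 \<Longrightarrow> (\<sigma> ^^ p) z = z"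
begin

lemma card_copy_less: "card {z \<in> Z. fst z = i} < p"
proof -
  consider "1 \<le> i" "i < p" | "i = p" | "{z \<in> Z. fst z = i} = {}"
    by (force simp: union_verts_def)
  then show ?thesis
  proof cases
    case 1
    then have "{z \<in> Z. fst z = i} = Pair i ` V1"
      by (auto simp: union_verts_def)
    then show ?thesis
      using card1 card_image_le[of V1 "Pair i"] graph1 by (simp add: fin_graph_def)
  next
    case 2
    then have "{z \<in> Z. fst z = i} = Pair i ` V2"
      by (auto simp: union_verts_def)
    then show ?thesis
      using card2 card_image_le[of V2 "Pair i"] graph2 by (simp add: fin_graph_def)
  next
    case 3
    then show ?thesis
      using prime_gt_0_nat[OF prime] by (simp only: card.empty)
  qed
qed

lemma fixed_copy_pointwise:
  assumes "copy_image i = i" and "z \<in> Z" and "fst z = i"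
  shows "\<sigma> z = z"
proof (rule funpow_prime_period_fixed[OF prime period])
  show "finite {z \<in> Z. fst z = i}"
    using graph1 graph2 by (simp add: finite_union_verts fin_graph_def)
  show "\<sigma> ` {z \<in> Z. fst z = i} \<subseteq> {z \<in> Z. fst z = i}"
    using assms(1) by (auto simp: \<sigma>_in fst_\<sigma>)
qed (use assms card_copy_less in auto)

lemma identity_if_last_copy_fixed:
  assumes last_fixed: "copy_image p = p" and "z \<in> Z"
  shows "\<sigma> z = z"
proof -
  obtain x0 where "x0 \<in> V1"
    using connected1 by (auto simp: connected_graph_def)
  have earlier_to_earlier: "copy_image i \<in> {1..<p}" if "i \<in> {1..<p}" for i
  proof -
    have z: "(i, x0) \<in> Z" and \<sigma>z: "\<sigma> (i, x0) \<in> Z"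
      using that \<open>x0 \<in> V1\<close> \<sigma>_in by auto
    have "copy_image i \<noteq> p"
    proof
      assume "copy_image i = p"
      then have "\<sigma> (\<sigma> (i, x0)) = \<sigma> (i, x0)"
        using fixed_copy_pointwise[OF last_fixed \<sigma>z] fst_\<sigma>[OF z] by simp
      then have "\<sigma> (i, x0) = (i, x0)"
        using inj_onD[OF \<sigma>_inj _ \<sigma>z z] by blast
      with \<open>copy_image i = p\<close> that show False
        using fst_\<sigma>[OF z] by simp
    qed
    with \<sigma>z show ?thesis
      using fst_\<sigma>[OF z] by (cases "\<sigma> (i, x0)") auto
  qed
  have earlier_fixed: "copy_image i = i" if "i \<in> {1..<p}" for i
  proof (rule funpow_prime_period_fixed[OF prime _ _ _ _ that])
    have "(i, x0) \<in> Z"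
      using that \<open>x0 \<in> V1\<close> by auto
    then show "(copy_image ^^ p) i = i"
      using fst_\<sigma>_funpow[of "(i, x0)" p] period by simp
  qed (use earlier_to_earlier prime_gt_0_nat[OF prime] in auto)
  show ?thesis
    using \<open>z \<in> Z\<close> last_fixed earlier_fixed fixed_copy_pointwise
    by (cases z) (auto simp: union_verts_def)
qed

end

theorem mainTheorem2:
  fixes V1 V2 :: "'a set" and E1 E2 :: "'a \<Rightarrow> 'a \<Rightarrow> bool" and n p :: nat
  assumes "fin_graph V1 E1" and "fin_graph V2 E2"
    and "connected_graph V1 E1" and "connected_graph V2 E2"
    and "card V1 = n" and "card V2 = n"
    and "prime p" and "p > n"
    and "representable (integer_mod_group p) (union_verts p V1 V2) (union_edges p E1 E2)"
  shows "graph_iso V1 E1 V2 E2"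
proof -
  obtain \<sigma> where aut: "\<sigma> \<in> carrier (aut_group (union_verts p V1 V2) (union_edges p E1 E2))"
    and period: "\<And>z. z \<in> union_verts p V1 V2 \<Longrightarrow> (\<sigma> ^^ p) z = z"
    and moved: "\<exists>z \<in> union_verts p V1 V2. \<sigma> z \<noteq> z"
    using representable_integer_mod_group_generator[OF assms(9)] prime_gt_1_nat[OF assms(7)]
    by blast
  interpret union_automorphism V1 V2 E1 E2 p \<sigma>
    using assms(1-4) aut by unfold_locales
  interpret prime_order_union_automorphism V1 V2 E1 E2 p \<sigma>
    using assms(5-8) period by unfold_locales auto
  show ?thesis
  proof (rule graph_iso_if_last_copy_moved)
    show "card V1 = card V2"
      using assms(5,6) by simp
    show "copy_image p \<noteq> p"
      using identity_if_last_copy_fixed moved by blast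
  qed
qed

end
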